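(* Let $b>1$ be an integer and let $H$ be a generalized $b$-happy function with digit mean $\mu$ and digit standard deviation $\sigma$. Let $n$ be a positive integer with $4\mid n$ and let $C\subseteq\mathbb{Z}_{\ge 0}$. Given $\lambda>0$, let $$J_{n,\lambda}=\left[1+\tfrac34 n\mu+\lambda\sigma\sqrt{\tfrac34 n},\ \tfrac14 n+\tfrac34 n\mu-\lambda\sigma\sqrt{\tfrac34 n}\right].$$ Suppose there is a nonempty integer interval $I\subseteq J_{n,\lambda}$ with type-$C$ density $d$. Then there exists an $n$-strict interval $I_2$ whose type-$C$ density is at least $$\left(1-\frac{1}{\lambda^2}\right)\frac{d}{1+\frac{\sqrt{3n}\,\sigma\lambda}{|I|}}.$$
   Context: A generalized $b$-happy function: fix an integer $b>1$ and non-negative integers $h(0),\dots,h(b-1)$ with $h(0)=0$, $h(1)=1$; for $n=\sum_{i=0}^k a_ib^i$ in base $b$, $H(n)=\sum_{i=0}^k h(a_i)$. Digit mean $\mu=\frac1b\sum_{j=0}^{b-1}h(j)$, digit variance $\sigma^2=\frac1b\sum_{j=0}^{b-1}(h(j)-\mu)^2$. For $C\subseteq\mathbb{Z}_{\ge0}$, an integer $n$ is type-$C$ if $H^k(n)\in C$ for some integer $k\ge0$. An integer interval $[a,c]$ ($a,c$ real) is the set of integers $x$ with $a\le x\le c$; $|I|$ is its cardinality. The type-$C$ density of a finite nonempty integer interval $I$ is $|\{n\in I:n\text{ type-}C\}|/|I|$. An integer interval $I$ is $n$-strict if $I\subseteq[b^{n-1},b^n-1]$ and $|I|=b^{3n/4}$.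 *)

theory Defs
  imports "HOL-Analysis.Analysis"
begin

text \<open>Digit function h of a generalized b-happy function: values h 0, ..., h (b-1)
  are non-negative integers with h 0 = 0 and h 1 = 1 (values at j >= b are irrelevant).\<close>
definition gen_happy_digits :: "nat \<Rightarrow> (nat \<Rightarrow> nat) \<Rightarrow> bool" where
  "gen_happy_digits b h \<longleftrightarrow> b > 1 \<and> h 0 = 0 \<and> h 1 = 1"

function happyH :: "nat \<Rightarrow> (nat \<Rightarrow> nat) \<Rightarrow> nat \<Rightarrow> nat" where
  "happyH b h n = (if n = 0 \<or> b \<le> 1 then 0 else h (n mod b) + happyH b h (n div b))"
  by auto
termination
  by (relation "Wellfounded.measure (\<lambda>(b, h, n). n)") auto

definition digit_mean :: "nat \<Rightarrow> (nat \<Rightarrow> nat) \<Rightarrow> real" where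
  "digit_mean b h = (1 / real b) * (\<Sum>j<b. real (h j))"

definition digit_sd :: "nat \<Rightarrow> (nat \<Rightarrow> nat) \<Rightarrow> real" where
  "digit_sd b h = sqrt ((1 / real b) * (\<Sum>j<b. (real (h j) - digit_mean b h)^2))"

definition typeC :: "nat \<Rightarrow> (nat \<Rightarrow> nat) \<Rightarrow> nat set \<Rightarrow> nat \<Rightarrow> bool" where
  "typeC b h C m \<longleftrightarrow> (\<exists>k. (happyH b h ^^ k) m \<in> C)"

text \<open>Nonempty integer intervals (all relevant ones consist of non-negative integers).\<close>
definition int_interval :: "nat set \<Rightarrow> bool" where
  "int_interval I \<longleftrightarrow> (\<exists>a c. a \<le> c \<and> I = {a..c})"

definition typeC_density :: "nat \<Rightarrow> (nat \<Rightarrow> nat) \<Rightarrow> nat set \<Rightarrow> nat set \<Rightarrow> real" where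
  "typeC_density b h C I = real (card {m \<in> I. typeC b h C m}) / real (card I)"

definition n_strict :: "nat \<Rightarrow> nat \<Rightarrow> nat set \<Rightarrow> bool" where
  "n_strict b n I \<longleftrightarrow> int_interval I \<and> I \<subseteq> {b^(n-1) .. b^n - 1}
     \<and> real (card I) = real b powr (3 * real n / 4)"

definition J_interval :: "nat \<Rightarrow> (nat \<Rightarrow> nat) \<Rightarrow> nat \<Rightarrow> real \<Rightarrow> nat set" where
  "J_interval b h n lam = {x. 1 + 3/4 * real n * digit_mean b h + lam * digit_sd b h * sqrt (3/4 * real n) \<le> real x
      \<and> real x \<le> 1/4 * real n + 3/4 * real n * digit_mean b h - lam * digit_sd b h * sqrt (3/4 * real n)}"

end

theory Submission
  imports Defs
begin

text \<open>Write \<open>n = 4q\<close> and \<open>j = 3q\<close>. A number consisting of a \<open>q\<close>-digit prefix \<open>x\<close> followed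
  by \<open>j\<close> free digits \<open>y\<close> has \<open>H = H x + H y\<close>, so the block of all such numbers is an
  \<open>n\<close>-strict interval, and the prefixes \<open>1\<dots>10\<dots>0\<close> with \<open>k\<close> ones realise every value
  \<open>H x = k\<close> with \<open>1 \<le> k \<le> q\<close>.
  Over the \<open>b^j\<close> suffixes \<open>y\<close>, \<open>H y\<close> has mean \<open>j\<mu>\<close> and variance \<open>j\<sigma>\<^sup>2\<close>, so by
  Chebyshev all but a fraction \<open>1/\<lambda>\<^sup>2\<close> of them satisfy \<open>|H y - j\<mu>| \<le> R = \<lambda>\<sigma>\<surd>j\<close>.
  For such a good \<open>y\<close> and a type-\<open>C\<close> element \<open>t\<close> of \<open>I\<close>, the shift \<open>k = t - H y\<close> ranges over
  at most \<open>|I| + 2R\<close> values, all in \<open>[1, q]\<close> because \<open>I \<subseteq> J\<close>. Averaging, some \<open>k\<close> is hit by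
  at least \<open>(#good y)(#type-C t) / (|I| + 2R)\<close> pairs, and the block with \<open>H x = k\<close> then contains as
  many type-\<open>C\<close> numbers, since \<open>m\<close> is type-\<open>C\<close> whenever \<open>H m\<close> is.\<close>

declare happyH.simps [simp del]

lemma happyH_0 [simp]: "happyH b h 0 = 0"
  by (simp add: happyH.simps)

lemma happyH_digit_step:
  assumes "b > 1" "h 0 = 0" "d < b"
  shows "happyH b h (d + b * y) = h d + happyH b h y"
proof (cases "d + b * y = 0")
  case True
  then show ?thesis using assms by simp
next
  case False
  have "(d + b * y) mod b = d" "(d + b * y) div b = y" using assms by auto
  then show ?thesis using False assms(1,2) by (subst happyH.simps) simp
qed

lemma happyH_append:
  assumes "b > 1" "h 0 = 0" "y < b ^ j"
  shows "happyH b h (x * b ^ j + y) = happyH b h x + happyH b h y"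
  using assms(3)
proof (induction j arbitrary: y)
  case 0
  then show ?case by simp
next
  case (Suc j)
  have d: "y mod b < b" and y': "y div b < b ^ j"
    using assms(1) Suc.prems by (auto simp: less_mult_imp_div_less mult.commute)
  have "x * b ^ Suc j + y = y mod b + b * (x * b ^ j + y div b)"
    by (simp add: algebra_simps)
  then have "happyH b h (x * b ^ Suc j + y) = h (y mod b) + happyH b h (x * b ^ j + y div b)"
    using happyH_digit_step[of b h, OF assms(1,2) d] by simp
  also have "\<dots> = happyH b h x + (h (y mod b) + happyH b h (y div b))"
    using Suc.IH[OF y'] by simp
  also have "h (y mod b) + happyH b h (y div b) = happyH b h y"
    using happyH_digit_step[of b h "y mod b" "y div b", OF assms(1,2) d] by simp
  finally show ?case .
qed

fun repunit :: "nat \<Rightarrow> nat \<Rightarrow> nat" where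
  "repunit b 0 = 0"
| "repunit b (Suc k) = 1 + b * repunit b k"

lemma happyH_repunit:
  assumes "b > 1" "h 0 = 0" "h 1 = 1"
  shows "happyH b h (repunit b k) = k"
  using happyH_digit_step[of b h 1, OF assms(1,2)] assms by (induction k) simp_all

lemma repunit_less_power:
  assumes "b > 1"
  shows "repunit b k < b ^ k"
proof (induction k)
  case 0
  then show ?case by simp
next
  case (Suc k)
  then have "b * (repunit b k + 1) \<le> b * b ^ k" by (intro mult_le_mono2) simp
  then show ?case using assms by simp
qed

lemma power_le_repunit_Suc: "b ^ k \<le> repunit b (Suc k)"
proof (induction k)
  case 0
  then show ?case by simp
next
  case (Suc k)
  then have "b * b ^ k \<le> b * repunit b (Suc k)" by (rule mult_le_mono2)
  then show ?case by simp
qed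

lemma exists_ndigit_happyH_eq:
  assumes "b > 1" "h 0 = 0" "h 1 = 1" "1 \<le> k" "k \<le> q"
  shows "\<exists>x. b ^ (q - 1) \<le> x \<and> x < b ^ q \<and> happyH b h x = k"
proof (intro exI conjI)
  define x where "x = repunit b k * b ^ (q - k)"
  have split_q: "b ^ q = b ^ k * b ^ (q - k)" "b ^ (q - 1) = b ^ (k - 1) * b ^ (q - k)"
    using assms(4,5) by (simp_all flip: power_add)
  show "b ^ (q - 1) \<le> x"
    unfolding x_def split_q using power_le_repunit_Suc[of b "k - 1"] assms(4) by simp
  show "x < b ^ q"
    unfolding x_def split_q using repunit_less_power[OF assms(1)] assms(1) by simp
  show "happyH b h x = k"
    using happyH_append[of b h 0 "q - k" "repunit b k", OF assms(1,2)] assms(1)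
    by (simp add: x_def happyH_repunit[OF assms(1-3)])
qed

definition digit_block :: "nat \<Rightarrow> nat \<Rightarrow> nat \<Rightarrow> nat set" where
  "digit_block b j x = {x * b ^ j .. x * b ^ j + b ^ j - 1}"

lemma digit_block_eq_image:
  assumes "b > 0"
  shows "digit_block b j x = (\<lambda>y. x * b ^ j + y) ` {..<b ^ j}"
proof -
  have "b ^ j > 0" using assms by simp
  then have "{x * b ^ j .. x * b ^ j + b ^ j - 1} = {x * b ^ j ..< x * b ^ j + b ^ j}"
    by (intro set_eqI) (simp only: atLeastAtMost_iff atLeastLessThan_iff, linarith)
  also have "\<dots> = (\<lambda>y. x * b ^ j + y) ` {..<b ^ j}"
    by (simp add: lessThan_atLeast0 add.commute[of "b ^ j"])
  finally show ?thesis unfolding digit_block_def .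
qed

lemma card_digit_block:
  assumes "b > 0"
  shows "card (digit_block b j x) = b ^ j"
  unfolding digit_block_eq_image[OF assms] by (simp add: card_image)

lemma n_strict_digit_block:
  assumes "b > 1" "4 dvd n" "b ^ (n div 4 - 1) \<le> x" "x < b ^ (n div 4)"
  shows "n_strict b n (digit_block b (3 * (n div 4)) x)"
proof -
  define q where "q = n div 4"
  define j where "j = 3 * q"
  have n: "n = q + j" using assms(2) unfolding q_def j_def by auto
  have "q \<noteq> 0" using assms(3,4) unfolding q_def by (metis diff_0_eq_0 leD power_0)
  then have lower: "b ^ (n - 1) = b ^ (q - 1) * b ^ j" unfolding n by (simp flip: power_add)
  have "(x + 1) * b ^ j \<le> b ^ q * b ^ j"
    using assms(4) unfolding q_def by (intro mult_le_mono1) simp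
  then have upper: "x * b ^ j + b ^ j \<le> b ^ n" unfolding n by (simp add: power_add algebra_simps)
  have "3 * real n / 4 = real j" unfolding n j_def by simp
  then have "real b powr (3 * real n / 4) = real b ^ j" using assms(1) by (simp add: powr_realpow)
  moreover have "digit_block b j x \<subseteq> {b ^ (n - 1) .. b ^ n - 1}"
    using assms(3) lower upper unfolding digit_block_def q_def by auto
  moreover have "int_interval (digit_block b j x)"
  proof -
    have "0 < b ^ j" using assms(1) by simp
    then have "x * b ^ j \<le> x * b ^ j + b ^ j - 1" by linarith
    then show ?thesis unfolding int_interval_def digit_block_def by blast
  qed
  ultimately show ?thesis
    using card_digit_block[of b j x] assms(1) unfolding n_strict_def j_def q_def by simp
qed

lemma exists_n_strict:
  assumes "b > 1" "4 dvd n" "n > 0"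
  shows "\<exists>I. n_strict b n I"
proof -
  have "n div 4 > 0" using assms(2,3) by auto
  then have "b ^ (n div 4 - 1) < b ^ (n div 4)" using assms(1) by (intro power_strict_increasing) auto
  then show ?thesis using n_strict_digit_block[OF assms(1,2)] by blast
qed

lemma typeC_happyH:
  assumes "typeC b h C (happyH b h m)"
  shows "typeC b h C m"
proof -
  obtain k where "(happyH b h ^^ k) (happyH b h m) \<in> C"
    using assms unfolding typeC_def by blast
  then have "(happyH b h ^^ Suc k) m \<in> C" by (simp only: funpow_Suc_right o_apply)
  then show ?thesis unfolding typeC_def by blast
qed

lemma typeC_density_digit_block_ge:
  assumes "b > 1" "h 0 = 0" "G \<subseteq> {..<b ^ j}"
  shows "real (card {y \<in> G. typeC b h C (happyH b h x + happyH b h y)}) / real (b ^ j)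
           \<le> typeC_density b h C (digit_block b j x)"
proof -
  let ?shift = "\<lambda>y. x * b ^ j + y"
  have "?shift ` {y \<in> G. typeC b h C (happyH b h x + happyH b h y)}
          \<subseteq> {m \<in> digit_block b j x. typeC b h C m}"
    using assms happyH_append[of b h _ j x] typeC_happyH
    by (auto simp: digit_block_eq_image)
  then have "card {y \<in> G. typeC b h C (happyH b h x + happyH b h y)}
               \<le> card {m \<in> digit_block b j x. typeC b h C m}"
    by (rule card_inj_on_le[rotated]) (auto simp: digit_block_def)
  then show ?thesis
    unfolding typeC_density_def card_digit_block[of b j x, OF order.strict_trans[OF zero_less_one assms(1)]]
    by (simp add: divide_right_mono)
qed

lemma sum_lessThan_mult_split:
  fixes g :: "nat \<Rightarrow> 'a::comm_monoid_add"
  shows "(\<Sum>i<N * b. g i) = (\<Sum>y<N. \<Sum>d<b. g (d + b * y))"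
proof -
  have "(\<Sum>i<N * b. g i) = (\<Sum>y<N. sum g {y * b..<y * b + b})"
    by (rule sum.nat_group[symmetric])
  also have "\<dots> = (\<Sum>y<N. \<Sum>d<b. g (d + b * y))"
  proof (rule sum.cong[OF refl])
    fix y
    have "sum g {0 + y * b..<b + y * b} = (\<Sum>d = 0..<b. g (d + y * b))"
      by (rule sum.shift_bounds_nat_ivl)
    then show "sum g {y * b..<y * b + b} = (\<Sum>d<b. g (d + b * y))"
      by (simp add: atLeast0LessThan add.commute mult.commute)
  qed
  finally show ?thesis .
qed

lemma digit_sd_nonneg: "digit_sd b h \<ge> 0"
  unfolding digit_sd_def by (simp add: sum_nonneg)

lemma sum_digit_deviation:
  assumes "b > 0"
  shows "(\<Sum>d<b. real (h d) - digit_mean b h) = 0"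
  using assms by (simp add: sum_subtractf digit_mean_def)

lemma sum_digit_sq_deviation:
  assumes "b > 0"
  shows "(\<Sum>d<b. (real (h d) - digit_mean b h)^2) = real b * (digit_sd b h)^2"
proof -
  have "0 \<le> (\<Sum>d<b. (real (h d) - digit_mean b h)^2)" by (intro sum_nonneg) simp
  then show ?thesis using assms by (simp add: digit_sd_def)
qed

lemma sum_happyH_sq_deviation:
  assumes "b > 1" "h 0 = 0"
  shows "(\<Sum>y<b ^ j. (real (happyH b h y) - real j * digit_mean b h)^2)
           = real (b ^ j) * real j * (digit_sd b h)^2"
proof (induction j)
  case 0
  then show ?case by simp
next
  case (Suc j)
  define u where "u d = real (h d) - digit_mean b h" for d
  define v where "v y = real (happyH b h y) - real j * digit_mean b h" for y
  have digit_decomp: "real (happyH b h (d + b * y)) - real (Suc j) * digit_mean b h = u d + v y"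
    if "d < b" for d y
    using happyH_digit_step[of b h d y, OF assms that] unfolding u_def v_def
    by (simp add: algebra_simps)
  have "(\<Sum>y<b ^ Suc j. (real (happyH b h y) - real (Suc j) * digit_mean b h)^2)
          = (\<Sum>y<b ^ j. \<Sum>d<b. (u d + v y)^2)"
    unfolding power_Suc2 sum_lessThan_mult_split by (intro sum.cong refl) (simp add: digit_decomp del: of_nat_Suc)
  also have "\<dots> = (\<Sum>y<b ^ j. (\<Sum>d<b. (u d)^2) + 2 * v y * (\<Sum>d<b. u d) + real b * (v y)^2)"
    by (simp add: power2_sum sum.distrib sum_distrib_left sum_distrib_right algebra_simps)
  also have "\<dots> = real (b ^ j) * (real b * (digit_sd b h)^2) + real b * (\<Sum>y<b ^ j. (v y)^2)"
    using assms(1) sum_digit_deviation[of b h] sum_digit_sq_deviation[of b h]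
    by (simp add: u_def sum.distrib sum_distrib_left)
  also have "\<dots> = real (b ^ Suc j) * real (Suc j) * (digit_sd b h)^2"
    using Suc.IH unfolding v_def by (simp add: algebra_simps)
  finally show ?case .
qed

lemma card_abs_gt_mult_sq_le:
  fixes f :: "'a \<Rightarrow> real"
  assumes "finite A" "R \<ge> 0"
  shows "real (card {x \<in> A. R < \<bar>f x\<bar>}) * R^2 \<le> (\<Sum>x\<in>A. (f x)^2)"
proof -
  have "real (card {x \<in> A. R < \<bar>f x\<bar>}) * R^2 = (\<Sum>x\<in>{x \<in> A. R < \<bar>f x\<bar>}. R^2)"
    by simp
  also have "\<dots> \<le> (\<Sum>x\<in>{x \<in> A. R < \<bar>f x\<bar>}. (f x)^2)"
    using assms(2) by (intro sum_mono) (auto simp flip: abs_le_square_iff)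
  also have "\<dots> \<le> (\<Sum>x\<in>A. (f x)^2)"
    using assms(1) by (intro sum_mono2) auto
  finally show ?thesis .
qed

lemma card_happyH_concentrated:
  assumes "b > 1" "h 0 = 0" "lam > 0"
  shows "(1 - 1 / lam^2) * real (b ^ j)
           \<le> real (card {y \<in> {..<b ^ j}. \<bar>real (happyH b h y) - real j * digit_mean b h\<bar>
                                           \<le> lam * digit_sd b h * sqrt (real j)})"
    (is "_ \<le> real (card ?Good)")
proof -
  define f where "f y = real (happyH b h y) - real j * digit_mean b h" for y
  define R where "R = lam * digit_sd b h * sqrt (real j)"
  define Bad where "Bad = {y \<in> {..<b ^ j}. R < \<bar>f y\<bar>}"
  have sum_sq: "(\<Sum>y<b ^ j. (f y)^2) = real (b ^ j) * real j * (digit_sd b h)^2"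
    unfolding f_def by (rule sum_happyH_sq_deviation[of b h j, OF assms(1,2)])
  have bad: "real (card Bad) \<le> real (b ^ j) / lam^2"
  proof (cases "digit_sd b h = 0 \<or> j = 0")
    case True
    then have "\<forall>y\<in>{..<b ^ j}. (f y)^2 = 0"
      using sum_sq by (subst sum_nonneg_eq_0_iff[symmetric]) auto
    then have "Bad = {}" unfolding Bad_def using True by (auto simp: R_def)
    then show ?thesis by simp
  next
    case False
    then have pos: "0 < (digit_sd b h)^2 * real j" using digit_sd_nonneg by simp
    have "real (card Bad) * R^2 \<le> real (b ^ j) * real j * (digit_sd b h)^2"
      unfolding Bad_def sum_sq[symmetric]
      using assms(3) digit_sd_nonneg by (intro card_abs_gt_mult_sq_le) (simp_all add: R_def)
    then have "real (card Bad) * lam^2 * ((digit_sd b h)^2 * real j)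
                 \<le> real (b ^ j) * ((digit_sd b h)^2 * real j)"
      by (simp add: R_def power_mult_distrib algebra_simps)
    then have "real (card Bad) * lam^2 \<le> real (b ^ j)"
      using pos by (rule mult_right_le_imp_le)
    then show ?thesis
      using assms(3) by (simp add: pos_le_divide_eq)
  qed
  have "card ?Good + card Bad = card (?Good \<union> Bad)"
    by (rule card_Un_disjoint[symmetric]) (auto simp: Bad_def f_def R_def)
  also have "?Good \<union> Bad = {..<b ^ j}"
    unfolding Bad_def f_def R_def by auto
  finally have "card ?Good + card Bad = b ^ j" by simp
  then have "real (card ?Good) + real (card Bad) = real (b ^ j)" by (simp only: of_nat_add[symmetric])
  then show ?thesis using bad by (simp add: left_diff_distrib)
qed

lemma real_card_le_width:
  fixes S :: "nat set"
  assumes "finite S" "S \<noteq> {}" "\<And>k. k \<in> S \<Longrightarrow> L \<le> real k \<and> real k \<le> U"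
  shows "real (card S) \<le> U - L + 1"
proof -
  have "card S \<le> card {Min S..Max S}"
    using assms(1,2) by (intro card_mono) auto
  then have "card S \<le> Suc (Max S) - Min S" by simp
  moreover have "Min S \<le> Max S" "L \<le> real (Min S)" "real (Max S) \<le> U"
    using assms Min_in Max_in by auto
  ultimately show ?thesis by linarith
qed

lemma exists_shift_hitting_many:
  fixes g :: "'a \<Rightarrow> nat"
  assumes "finite G" "finite T" "finite K" "K \<noteq> {}"
    and "\<And>y t. y \<in> G \<Longrightarrow> t \<in> T \<Longrightarrow> g y \<le> t \<and> t - g y \<in> K"
  shows "\<exists>k\<in>K. card G * card T \<le> card {y \<in> G. k + g y \<in> T} * card K"
proof -
  have fiber: "card {k \<in> K. k + g y \<in> T} = card T" if "y \<in> G" for y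
  proof -
    have "bij_betw (\<lambda>k. k + g y) {k \<in> K. k + g y \<in> T} T"
      using assms(5)[OF that] by (intro bij_betw_byWitness[of _ "\<lambda>t. t - g y"]) auto
    then show ?thesis by (rule bij_betw_same_card)
  qed
  have "card G * card T = (\<Sum>y\<in>G. card {k \<in> K. k + g y \<in> T})"
    using fiber by simp
  also have "\<dots> = (\<Sum>y\<in>G. \<Sum>k\<in>K. if k + g y \<in> T then 1 else 0)"
    using assms(3) by (simp add: sum.inter_filter[symmetric])
  also have "\<dots> = (\<Sum>k\<in>K. \<Sum>y\<in>G. if k + g y \<in> T then 1 else 0)"
    by (rule sum.swap)
  also have "\<dots> = (\<Sum>k\<in>K. card {y \<in> G. k + g y \<in> T})"
    using assms(1) by (simp add: sum.inter_filter[symmetric])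
  finally have total: "card G * card T = (\<Sum>k\<in>K. card {y \<in> G. k + g y \<in> T})" .
  define cnt where "cnt k = card {y \<in> G. k + g y \<in> T}" for k
  obtain k where "k \<in> K" and k_max: "cnt k = Max (cnt ` K)"
  proof -
    have "Max (cnt ` K) \<in> cnt ` K" using assms(3,4) by (intro Max_in) auto
    then show ?thesis using that by auto
  qed
  have "card G * card T \<le> card K * cnt k"
    unfolding total cnt_def[symmetric] k_max
    using sum_bounded_above[of K cnt "Max (cnt ` K)"] assms(3) by simp
  then show ?thesis using \<open>k \<in> K\<close> unfolding cnt_def by (auto simp: mult.commute)
qed

lemma exists_shift_hitting_many_in_window:
  fixes g :: "'a \<Rightarrow> nat"
  assumes "finite G" "G \<noteq> {}" "T \<subseteq> {a..c}" "T \<noteq> {}"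
    and range: "\<And>y. y \<in> G \<Longrightarrow> L \<le> real (g y) \<and> real (g y) \<le> U"
    and shift: "\<And>y t. y \<in> G \<Longrightarrow> t \<in> T \<Longrightarrow> g y < t \<and> t \<le> q + g y"
  shows "\<exists>k. 1 \<le> k \<and> k \<le> q \<and> real (card G) * real (card T)
               \<le> real (card {y \<in> G. k + g y \<in> T}) * (real (card {a..c}) + U - L)"
proof -
  define K where "K = {k. 1 \<le> k \<and> k \<le> q \<and> real a - U \<le> real k \<and> real k \<le> real c - L}"
  have fin: "finite T" "finite K"
    using finite_subset[OF assms(3)] finite_subset[of K "{..q}"] unfolding K_def by auto
  have in_K: "g y \<le> t \<and> t - g y \<in> K" if "y \<in> G" "t \<in> T" for y t
    using shift[OF that] range[OF that(1)] assms(3) that(2) unfolding K_def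
    by (auto simp: of_nat_diff)
  have "K \<noteq> {}"
  proof -
    obtain y t where "y \<in> G" "t \<in> T" using assms(2,4) by blast
    then show ?thesis using in_K by blast
  qed
  then obtain k where "k \<in> K" and k_hits: "card G * card T \<le> card {y \<in> G. k + g y \<in> T} * card K"
    using exists_shift_hitting_many[of G T K g, OF assms(1) fin \<open>K \<noteq> {}\<close> in_K] by blast
  have "real (card K) \<le> real c - L - (real a - U) + 1"
    using real_card_le_width[OF fin(2) \<open>K \<noteq> {}\<close>] unfolding K_def by auto
  also have "\<dots> = real (card {a..c}) + U - L"
    using \<open>K \<noteq> {}\<close> in_K assms(2-4) by (auto simp: of_nat_diff)
  finally have width: "real (card K) \<le> real (card {a..c}) + U - L" .
  have "real (card G) * real (card T) \<le> real (card {y \<in> G. k + g y \<in> T}) * real (card K)"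
    using k_hits by (simp only: of_nat_mult[symmetric] of_nat_le_iff)
  also have "\<dots> \<le> real (card {y \<in> G. k + g y \<in> T}) * (real (card {a..c}) + U - L)"
    using width by (rule mult_left_mono) simp
  finally have "real (card G) * real (card T)
                  \<le> real (card {y \<in> G. k + g y \<in> T}) * (real (card {a..c}) + U - L)" .
  then show ?thesis using \<open>k \<in> K\<close> unfolding K_def by blast
qed

lemma exists_n_strict_dense_digit_block:
  assumes "gen_happy_digits b h" "4 dvd n"
    and G: "G \<subseteq> {..<b ^ (3 * (n div 4))}" "G \<noteq> {}" "p * real (b ^ (3 * (n div 4))) \<le> real (card G)"
    and T: "T \<subseteq> {a..c}" "T \<noteq> {}" "\<And>t. t \<in> T \<Longrightarrow> typeC b h C t"
    and range: "\<And>y. y \<in> G \<Longrightarrow> L \<le> real (happyH b h y) \<and> real (happyH b h y) \<le> U"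
    and shift: "\<And>y t. y \<in> G \<Longrightarrow> t \<in> T \<Longrightarrow> happyH b h y < t \<and> t \<le> n div 4 + happyH b h y"
  shows "\<exists>I2. n_strict b n I2 \<and> p * real (card T) / (real (card {a..c}) + U - L) \<le> typeC_density b h C I2"
proof -
  have b: "b > 1" "h 0 = 0" "h 1 = 1" using assms(1) unfolding gen_happy_digits_def by auto
  define q where "q = n div 4"
  define j where "j = 3 * q"
  define D where "D = real (card {a..c}) + U - L"
  have fin: "finite G" "finite T" using finite_subset[OF G(1)] finite_subset[OF T(1)] by auto
  obtain k where k: "1 \<le> k" "k \<le> q"
    and hits: "real (card G) * real (card T) \<le> real (card {y \<in> G. k + happyH b h y \<in> T}) * D"
    using exists_shift_hitting_many_in_window[where g = "happyH b h", OF fin(1) G(2) T(1,2) range shift]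
    unfolding q_def D_def by blast
  obtain x where x: "b ^ (q - 1) \<le> x" "x < b ^ q" "happyH b h x = k"
    using exists_ndigit_happyH_eq[OF b k] by blast
  have "0 < real (card G) * real (card T)"
    using fin G(2) T(2) by (intro mult_pos_pos) (simp_all add: card_gt_0_iff)
  then have "D > 0" using hits by (smt (verit) mult_nonneg_nonpos of_nat_0_le_iff)
  have "p * real (card T) / D \<le> real (card G) / real (b ^ j) * real (card T) / D"
    using G(3) b(1) \<open>D > 0\<close> unfolding j_def q_def
    by (intro divide_right_mono mult_right_mono) (auto simp: pos_le_divide_eq)
  also have "\<dots> \<le> real (card {y \<in> G. k + happyH b h y \<in> T}) / real (b ^ j)"
    using hits \<open>D > 0\<close> b(1) by (simp add: field_simps)
  also have "\<dots> \<le> real (card {y \<in> G. typeC b h C (happyH b h x + happyH b h y)}) / real (b ^ j)"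
    using fin(1) T(3) unfolding x(3) by (intro divide_right_mono of_nat_mono card_mono) auto
  also have "\<dots> \<le> typeC_density b h C (digit_block b j x)"
    using G(1) unfolding j_def q_def by (rule typeC_density_digit_block_ge[of b h, OF b(1,2)])
  finally show ?thesis
    using n_strict_digit_block[OF b(1) assms(2) x(1,2)[unfolded q_def]]
    unfolding D_def j_def q_def by blast
qed

lemma exists_n_strict_typeC_density_ge:
  assumes "gen_happy_digits b h" "n > 0" "4 dvd n"
    and G: "G \<subseteq> {..<b ^ (3 * (n div 4))}" "p * real (b ^ (3 * (n div 4))) \<le> real (card G)"
    and T: "T \<subseteq> {a..c}" "\<And>t. t \<in> T \<Longrightarrow> typeC b h C t"
    and range: "\<And>y. y \<in> G \<Longrightarrow> L \<le> real (happyH b h y) \<and> real (happyH b h y) \<le> U"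
    and shift: "\<And>y t. y \<in> G \<Longrightarrow> t \<in> T \<Longrightarrow> happyH b h y < t \<and> t \<le> n div 4 + happyH b h y"
    and width: "0 < real (card {a..c}) + U - L"
  shows "\<exists>I2. n_strict b n I2 \<and> p * real (card T) / (real (card {a..c}) + U - L) \<le> typeC_density b h C I2"
proof (cases "p * real (card T) / (real (card {a..c}) + U - L) \<le> 0")
  case True
  have "b > 1" using assms(1) unfolding gen_happy_digits_def by simp
  then obtain I2 where "n_strict b n I2" using exists_n_strict[OF _ assms(3,2)] by blast
  moreover have "0 \<le> typeC_density b h C I2" unfolding typeC_density_def by simp
  ultimately show ?thesis using True by (blast intro: order.trans)
next
  case False
  then have "T \<noteq> {}" and "0 < p"
    using width unfolding not_le zero_less_divide_iff zero_less_mult_iff by auto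
  have "0 < p * real (b ^ (3 * (n div 4)))"
    using \<open>0 < p\<close> assms(1) unfolding gen_happy_digits_def by (intro mult_pos_pos) auto
  then have "G \<noteq> {}" using G(2) by auto
  then show ?thesis
    using exists_n_strict_dense_digit_block[OF assms(1,3) G(1) _ G(2) T(1) \<open>T \<noteq> {}\<close> T(2) range shift]
    by blast
qed

lemma J_interval_shift:
  assumes "4 dvd n" "t \<in> J_interval b h n lam"
    and "\<bar>real m - 3 / 4 * real n * digit_mean b h\<bar> \<le> lam * digit_sd b h * sqrt (3 / 4 * real n)"
  shows "m < t \<and> t \<le> n div 4 + m"
proof -
  have "real (n div 4) = 1 / 4 * real n" using assms(1) by auto
  then show ?thesis using assms(2,3) unfolding J_interval_def by (simp add: abs_le_iff)
qed

theorem theorem3p3: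
  fixes b n :: nat and h :: "nat \<Rightarrow> nat" and C :: "nat set" and lam :: real and I :: "nat set"
  assumes "gen_happy_digits b h"
    and "n > 0" and "4 dvd n"
    and "lam > 0"
    and "int_interval I" and "I \<subseteq> J_interval b h n lam"
  shows "\<exists>I2. n_strict b n I2 \<and>
     typeC_density b h C I2 \<ge>
       (1 - 1 / lam^2) * typeC_density b h C I
         / (1 + sqrt (3 * real n) * digit_sd b h * lam / real (card I))"
proof -
  have b: "b > 1" "h 0 = 0" using assms(1) unfolding gen_happy_digits_def by auto
  obtain a c where "a \<le> c" and I: "I = {a..c}" using assms(5) unfolding int_interval_def by blast
  then have "card I > 0" by simp
  define j where "j = 3 * (n div 4)"
  have j: "real j = 3 / 4 * real n" using assms(3) unfolding j_def by auto
  define M where "M = real j * digit_mean b h"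
  define R where "R = lam * digit_sd b h * sqrt (real j)"
  define G where "G = {y \<in> {..<b ^ j}. \<bar>real (happyH b h y) - M\<bar> \<le> R}"
  define T where "T = {t \<in> I. typeC b h C t}"
  have "R \<ge> 0" unfolding R_def using assms(4) digit_sd_nonneg by (intro mult_nonneg_nonneg) auto
  have "3 * real n = 4 * real j" using j by simp
  then have "sqrt (3 * real n) = 2 * sqrt (real j)" by (simp add: real_sqrt_mult)
  then have rhs: "(1 - 1 / lam^2) * typeC_density b h C I
                    / (1 + sqrt (3 * real n) * digit_sd b h * lam / real (card I))
                  = (1 - 1 / lam^2) * real (card T) / (real (card I) + 2 * R)"
    using \<open>card I > 0\<close> unfolding typeC_density_def T_def R_def
    by (simp add: divide_divide_times_eq distrib_left mult_ac)
  have card_G: "(1 - 1 / lam^2) * real (b ^ (3 * (n div 4))) \<le> real (card G)"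
    using card_happyH_concentrated[of b h lam j, OF b assms(4)] unfolding G_def M_def R_def j_def .
  have G_sub: "G \<subseteq> {..<b ^ (3 * (n div 4))}" unfolding G_def j_def by auto
  have range: "M - R \<le> real (happyH b h y) \<and> real (happyH b h y) \<le> M + R" if "y \<in> G" for y
    using that unfolding G_def by (simp add: abs_le_iff)
  have T_sub: "T \<subseteq> {a..c}" and T_typeC: "\<And>t. t \<in> T \<Longrightarrow> typeC b h C t"
    unfolding T_def I by auto
  have shift: "happyH b h y < t \<and> t \<le> n div 4 + happyH b h y" if "y \<in> G" "t \<in> T" for y t
  proof (rule J_interval_shift[OF assms(3)])
    show "t \<in> J_interval b h n lam" using assms(6) that(2) unfolding T_def by blast
    show "\<bar>real (happyH b h y) - 3 / 4 * real n * digit_mean b h\<bar>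
            \<le> lam * digit_sd b h * sqrt (3 / 4 * real n)"
      using that(1) unfolding G_def M_def R_def j by simp
  qed
  have "0 < real (card {a..c}) + 2 * R" using \<open>a \<le> c\<close> \<open>R \<ge> 0\<close> by simp
  then show ?thesis
    unfolding rhs unfolding I
    using exists_n_strict_typeC_density_ge[OF assms(1-3) G_sub card_G T_sub T_typeC range shift]
    by simp
qed

end
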